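(* Let $p$ be an odd prime and let $g$, $g'$ both be of the form \[F(x)+G\!\left(\tfrac1x\right)+H\!\left(\tfrac1{x-1}\right)+\sum_{j=4}^{r+1}J_j\!\left(\tfrac{1}{x-\theta_j}\right)\] described below, with the same pole orders, where $d_1>d_2>d_3$ and $\{d_1,d_2,d_3\}\cap\{d_4,\dots,d_{r+1}\}=\emptyset$. If $(M,\lambda,h)$ transforms $C_g$ into $C_{g'}$, then $M(x)=x$ and $h$ is a constant in $\mathbb{F}_p$; i.e., up to composition with $(x,y)\mapsto(x,y+c)$, $c\in\mathbb{F}_p$, every isomorphism preserving this form is $(x,y)\mapsto(x,\lambda y)$ for some $\lambda\in\mathbb{F}_p^\times$ (and then $g'=g/\lambda$ up to the relabeling of the $\theta_j$).
   Context: Form: $F(x)=\sum_{i=1}^{d_1}a_ix^i$, $G(x)=\sum_{i=1}^{d_2}b_ix^i$, $H(x)=\sum_{i=1}^{d_3}c_ix^i$, $J_j(x)=\sum_{i=1}^{d_j}e_{ij}x^i$ with all $d_i$ not divisible by $p$, $a_i=b_i=c_i=e_{ij}=0$ whenever $p\mid i$, $a_{d_1},b_{d_2},c_{d_3},e_{d_jj}\ne0$, and $\theta_4,\dots,\theta_{r+1}\in\overline{\mathbb{F}}_p\setminus\{0,1\}$ distinct. For $f\in\overline{\mathbb{F}}_p(x)$, $C_f$ is the curve $y^p-y=f(x)$. For a Möbius transformation $M(x)=\frac{\alpha x+\beta}{\gamma x+\delta}$ ($\alpha\delta-\beta\gamma\ne0$), $\lambda\in\mathbb{F}_p^\times$,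 $h\in\overline{\mathbb{F}}_p(x)$, we say $(M,\lambda,h)$ transforms $C_f$ into $C_{f'}$ if $f(M(x))=\lambda f'(x)+h(x)^p-h(x)$. *)

theory Defs
  imports "HOL-Computational_Algebra.Computational_Algebra"
begin

text \<open>Rational functions over a field k are modelled as k poly fract.\<close>

definition rconst :: "'a::field \<Rightarrow> 'a poly fract" where
  "rconst c = Fract [:c:] 1"

definition rX :: "'a::field poly fract" where
  "rX = Fract [:0, 1:] 1"

definition peval :: "'a::field poly \<Rightarrow> 'a poly fract \<Rightarrow> 'a poly fract" where
  "peval q z = poly (map_poly rconst q) z"

definition rcomp :: "'a::field_gcd poly fract \<Rightarrow> 'a poly fract \<Rightarrow> 'a poly fract" where
  "rcomp f m = (case quot_of_fract f of (a, b) \<Rightarrow> peval a m / peval b m)"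

definition mobius :: "'a::field \<Rightarrow> 'a \<Rightarrow> 'a \<Rightarrow> 'a \<Rightarrow> 'a poly fract" where
  "mobius \<alpha> \<beta> \<gamma> \<delta> = (rconst \<alpha> * rX + rconst \<beta>) / (rconst \<gamma> * rX + rconst \<delta>)"

definition is_alg_closure_Fp :: "nat \<Rightarrow> 'a::field itself \<Rightarrow> bool" where
  "is_alg_closure_Fp p _ \<longleftrightarrow> CHAR('a) = p \<and>
     (\<forall>q::'a poly. degree q > 0 \<longrightarrow> (\<exists>x. poly q x = 0)) \<and>
     (\<forall>x::'a. \<exists>n>0. x ^ (p ^ n) = x)"

definition good_poly :: "nat \<Rightarrow> nat \<Rightarrow> 'a::field poly \<Rightarrow> bool" where
  "good_poly p d q \<longleftrightarrow> degree q = d \<and> coeff q d \<noteq> 0 \<and> coeff q 0 = 0 \<and>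
     \<not> p dvd d \<and> (\<forall>i. p dvd i \<longrightarrow> coeff q i = 0)"

definition form_fun :: "nat \<Rightarrow> 'a::field poly \<Rightarrow> 'a poly \<Rightarrow> 'a poly \<Rightarrow> (nat \<Rightarrow> 'a poly)
     \<Rightarrow> (nat \<Rightarrow> 'a) \<Rightarrow> 'a poly fract" where
  "form_fun r F G H J \<theta> =
     peval F rX + peval G (1 / rX) + peval H (1 / (rX - 1)) +
     (\<Sum>j\<in>{4..r+1}. peval (J j) (1 / (rX - rconst (\<theta> j))))"

definition good_form :: "nat \<Rightarrow> nat \<Rightarrow> (nat \<Rightarrow> nat) \<Rightarrow> 'a::field poly \<Rightarrow> 'a poly \<Rightarrow> 'a poly
     \<Rightarrow> (nat \<Rightarrow> 'a poly) \<Rightarrow> (nat \<Rightarrow> 'a) \<Rightarrow> bool" where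
  "good_form p r d F G H J \<theta> \<longleftrightarrow>
     good_poly p (d 1) F \<and> good_poly p (d 2) G \<and> good_poly p (d 3) H \<and>
     (\<forall>j\<in>{4..r+1}. good_poly p (d j) (J j)) \<and>
     (\<forall>j\<in>{4..r+1}. \<theta> j \<noteq> 0 \<and> \<theta> j \<noteq> 1) \<and> inj_on \<theta> {4..r+1}"

definition transforms :: "nat \<Rightarrow> 'a::field_gcd \<Rightarrow> 'a \<Rightarrow> 'a \<Rightarrow> 'a \<Rightarrow> 'a \<Rightarrow> 'a poly fract
     \<Rightarrow> 'a poly fract \<Rightarrow> 'a poly fract \<Rightarrow> bool" where
  "transforms p \<alpha> \<beta> \<gamma> \<delta> lam h f f' \<longleftrightarrow>
     \<alpha> * \<delta> - \<beta> * \<gamma> \<noteq> 0 \<and> lam ^ p = lam \<and> lam \<noteq> 0 \<and>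
     rcomp f (mobius \<alpha> \<beta> \<gamma> \<delta>) = rconst lam * f' + h ^ p - h"

end

theory Submission
  imports Defs
begin

text \<open>The proof only looks at pole orders. Write g and g' for the two forms. For a Moebius
  transformation N the pole order at \<infinity> of g \<circ> N is the pole order of g at N(\<infinity>): d 1, d 2,
  d 3 or d j at \<infinity>, 0, 1 or \<theta> j, and nonpositive elsewhere; all these orders are prime to p.
  A term h ^ p - h has pole order at \<infinity> that is nonpositive or divisible by p, so it cannot
  disturb a pole order prime to p. Pulling the identity g \<circ> M = \<lambda> g' + h ^ p - h back by
  suitable N therefore shows that M fixes \<infinity>, 0 and 1, whose pole orders d 1 > d 2 > d 3 occur
  nowhere else, so M is the identity. Then g - \<lambda> g' = h ^ p - h, and at every point the
  principal part of g - \<lambda> g' has no exponent divisible by p; this forces h to have no poles at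
  all, so h is a constant c, and comparing constant terms at \<infinity> gives c ^ p = c.\<close>

section \<open>Pole order at infinity\<close>

text \<open>fdeg f is the order of the pole of f at \<infinity> (the negated order of its zero there); at
  f = 0 it is the junk value 0, which fdeg_le and has_fdeg work around.\<close>

definition fdeg :: "'a::field_gcd poly fract \<Rightarrow> int" where
  "fdeg f = int (degree (fst (quot_of_fract f))) - int (degree (snd (quot_of_fract f)))"

definition fdeg_le :: "int \<Rightarrow> 'a::field_gcd poly fract \<Rightarrow> bool" where
  "fdeg_le n f \<longleftrightarrow> f = 0 \<or> fdeg f \<le> n"

definition has_fdeg :: "int \<Rightarrow> 'a::field_gcd poly fract \<Rightarrow> bool" where
  "has_fdeg n f \<longleftrightarrow> f \<noteq> 0 \<and> fdeg f = n"

lemma Fract_eq_0_iff: "b \<noteq> 0 \<Longrightarrow> Fract a b = 0 \<longleftrightarrow> a = 0"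
  by (simp add: Zero_fract_def eq_fract)

lemma fdeg_Fract:
  fixes a b :: "'a::field_gcd poly"
  assumes "a \<noteq> 0" "b \<noteq> 0"
  shows "fdeg (Fract a b) = int (degree a) - int (degree b)"
proof -
  obtain a' b' where q: "quot_of_fract (Fract a b) = (a', b')"
    by (cases "quot_of_fract (Fract a b)")
  have b': "b' \<noteq> 0" using snd_quot_of_fract_nonzero[of "Fract a b"] q by simp
  have a': "a' \<noteq> 0"
    using fst_quot_of_fract_eq_0_iff[of "Fract a b"] q assms by (simp add: Fract_eq_0_iff)
  have "Fract a' b' = Fract a b" using Fract_quot_of_fract[of "Fract a b"] q by simp
  then have "a' * b = a * b'" using assms b' by (simp add: eq_fract)
  then have "degree a' + degree b = degree a + degree b'"
    using assms a' b' by (metis degree_mult_eq)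
  then show ?thesis unfolding fdeg_def q by simp
qed

lemma fdeg_le_Fract:
  fixes a b :: "'a::field_gcd poly"
  assumes "b \<noteq> 0"
  shows "fdeg_le n (Fract a b) \<longleftrightarrow> a = 0 \<or> int (degree a) \<le> int (degree b) + n"
  using assms by (cases "a = 0") (auto simp: fdeg_le_def fdeg_Fract Fract_eq_0_iff)

lemma has_fdeg_Fract:
  fixes a b :: "'a::field_gcd poly"
  assumes "b \<noteq> 0" "a \<noteq> 0"
  shows "has_fdeg n (Fract a b) \<longleftrightarrow> int (degree a) = int (degree b) + n"
  using assms by (auto simp: has_fdeg_def fdeg_Fract Fract_eq_0_iff)

lemma has_fdeg_to_fract: "q \<noteq> 0 \<Longrightarrow> has_fdeg (int (degree q)) (to_fract q)"
  by (simp add: to_fract_def has_fdeg_Fract)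

lemma fdeg_le_to_fract_iff: "fdeg_le n (to_fract q) \<longleftrightarrow> q = 0 \<or> int (degree q) \<le> n"
  by (simp add: to_fract_def fdeg_le_Fract)

lemma fdeg_le_0 [simp]: "fdeg_le n 0"
  by (simp add: fdeg_le_def)

lemma fdeg_le_mono: "fdeg_le n f \<Longrightarrow> n \<le> m \<Longrightarrow> fdeg_le m f"
  by (auto simp: fdeg_le_def)

lemma has_fdeg_imp_fdeg_le: "has_fdeg n f \<Longrightarrow> n \<le> m \<Longrightarrow> fdeg_le m f"
  by (auto simp: fdeg_le_def has_fdeg_def)

lemma has_fdeg_not_fdeg_le: "has_fdeg n f \<Longrightarrow> m < n \<Longrightarrow> \<not> fdeg_le m f"
  by (auto simp: fdeg_le_def has_fdeg_def)

lemma has_fdeg_unique: "has_fdeg n f \<Longrightarrow> has_fdeg m f \<Longrightarrow> n = m"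
  by (simp add: has_fdeg_def)

lemma fdeg_le_or_has_fdeg: "fdeg_le n f \<or> (\<exists>m>n. has_fdeg m f)"
  by (auto simp: fdeg_le_def has_fdeg_def)

lemma fdeg_le_add:
  fixes f g :: "'a::field_gcd poly fract"
  assumes "fdeg_le n f" "fdeg_le n g"
  shows "fdeg_le n (f + g)"
proof -
  obtain a b where f: "f = Fract a b" "b \<noteq> 0" by (cases f)
  obtain c e where g: "g = Fract c e" "e \<noteq> 0" by (cases g)
  have "int (degree (a * e)) \<le> int (degree (b * e)) + n" if "a \<noteq> 0"
    using assms(1) f g that by (simp add: fdeg_le_Fract degree_mult_eq)
  moreover have "int (degree (c * b)) \<le> int (degree (b * e)) + n" if "c \<noteq> 0"
    using assms(2) f g that by (simp add: fdeg_le_Fract degree_mult_eq)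
  moreover have "degree (a * e + c * b) \<le> max (degree (a * e)) (degree (c * b))"
    by (rule degree_add_le_max)
  ultimately have "a * e + c * b = 0 \<or> int (degree (a * e + c * b)) \<le> int (degree (b * e)) + n"
    by (cases "a = 0"; cases "c = 0") auto
  then show ?thesis using f g by (simp add: fdeg_le_Fract)
qed

lemma has_fdeg_add:
  fixes f g :: "'a::field_gcd poly fract"
  assumes "has_fdeg n f" "fdeg_le m g" "m < n"
  shows "has_fdeg n (f + g)"
proof (cases "g = 0")
  case False
  obtain a b where f: "f = Fract a b" "b \<noteq> 0" by (cases f)
  obtain c e where g: "g = Fract c e" "e \<noteq> 0" by (cases g)
  have "a \<noteq> 0" "c \<noteq> 0" using assms(1) False f g by (auto simp: has_fdeg_def Fract_eq_0_iff)
  then have ae: "int (degree (a * e)) = int (degree (b * e)) + n"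
    and cb: "int (degree (c * b)) \<le> int (degree (b * e)) + m"
    using assms f g by (simp_all add: has_fdeg_Fract fdeg_le_Fract degree_mult_eq)
  then have "degree (c * b) < degree (a * e)" using assms(3) by linarith
  then have "degree (a * e + c * b) = degree (a * e)" by (rule degree_add_eq_left)
  moreover have "a * e + c * b \<noteq> 0"
    using \<open>degree (c * b) < degree (a * e)\<close> by (metis add_eq_0_iff degree_minus less_irrefl)
  ultimately show ?thesis using f g ae by (simp add: has_fdeg_Fract)
qed (use assms in simp)

lemma has_fdeg_add':
  "fdeg_le m f \<Longrightarrow> has_fdeg n g \<Longrightarrow> m < n \<Longrightarrow> has_fdeg n (f + g)"
  using has_fdeg_add[of n g m f] by (simp add: add.commute)

lemma fdeg_le_mult:
  fixes f g :: "'a::field_gcd poly fract"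
  assumes "fdeg_le n f" "fdeg_le m g"
  shows "fdeg_le (n + m) (f * g)"
proof -
  obtain a b where f: "f = Fract a b" "b \<noteq> 0" by (cases f)
  obtain c e where g: "g = Fract c e" "e \<noteq> 0" by (cases g)
  show ?thesis using assms f g
    by (cases "a = 0"; cases "c = 0") (auto simp: fdeg_le_Fract degree_mult_eq)
qed

lemma has_fdeg_mult:
  fixes f g :: "'a::field_gcd poly fract"
  assumes "has_fdeg n f" "has_fdeg m g"
  shows "has_fdeg (n + m) (f * g)"
proof -
  obtain a b where f: "f = Fract a b" "b \<noteq> 0" by (cases f)
  obtain c e where g: "g = Fract c e" "e \<noteq> 0" by (cases g)
  have "a \<noteq> 0" "c \<noteq> 0" using assms f g by (auto simp: has_fdeg_def Fract_eq_0_iff)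
  then show ?thesis using assms f g by (auto simp: has_fdeg_Fract degree_mult_eq)
qed

lemma has_fdeg_inverse:
  fixes f :: "'a::field_gcd poly fract"
  assumes "has_fdeg n f"
  shows "has_fdeg (- n) (inverse f)"
proof -
  obtain a b where f: "f = Fract a b" "b \<noteq> 0" by (cases f)
  have "a \<noteq> 0" using assms f by (auto simp: has_fdeg_def Fract_eq_0_iff)
  then show ?thesis using assms f by (auto simp: has_fdeg_Fract)
qed

lemma has_fdeg_divide: "has_fdeg n f \<Longrightarrow> has_fdeg m g \<Longrightarrow> has_fdeg (n - m) (f / g)"
  using has_fdeg_mult[OF _ has_fdeg_inverse] by (simp add: divide_inverse)

lemma fdeg_le_uminus: "fdeg_le n f \<Longrightarrow> fdeg_le n (- f)"
  by (cases f) (auto simp: fdeg_le_Fract)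

lemma fdeg_le_diff: "fdeg_le n f \<Longrightarrow> fdeg_le n g \<Longrightarrow> fdeg_le n (f - g)"
  using fdeg_le_add[of n f "- g"] fdeg_le_uminus[of n g] by simp

lemma has_fdeg_diff: "has_fdeg n f \<Longrightarrow> fdeg_le m g \<Longrightarrow> m < n \<Longrightarrow> has_fdeg n (f - g)"
  using has_fdeg_add[of n f m "- g"] fdeg_le_uminus[of m g] by simp

lemma has_fdeg_add_distinct:
  assumes "has_fdeg m f" "has_fdeg n g" "m \<noteq> n"
  shows "has_fdeg (max m n) (f + g)"
proof (cases "m < n")
  case True
  then show ?thesis using has_fdeg_add'[OF has_fdeg_imp_fdeg_le[OF assms(1) order_refl] assms(2)] by simp
next
  case False
  then show ?thesis using assms has_fdeg_add[OF assms(1) has_fdeg_imp_fdeg_le[OF assms(2) order_refl]] by simp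
qed

lemma fdeg_le_power: "fdeg_le n f \<Longrightarrow> n \<le> 0 \<Longrightarrow> fdeg_le (int k * n) (f ^ k)"
proof (induction k)
  case 0
  then show ?case by (simp add: fdeg_le_def fdeg_def)
next
  case (Suc k)
  then have "fdeg_le (n + int k * n) (f * f ^ k)" by (blast intro: fdeg_le_mult)
  then show ?case by (simp add: algebra_simps)
qed

lemma has_fdeg_power: "has_fdeg n f \<Longrightarrow> has_fdeg (int k * n) (f ^ k)"
proof (induction k)
  case 0
  then show ?case by (simp add: has_fdeg_def fdeg_def)
next
  case (Suc k)
  then have "has_fdeg (n + int k * n) (f * f ^ k)" by (blast intro: has_fdeg_mult)
  then show ?case by (simp add: algebra_simps)
qed

lemma fdeg_le_sum: "(\<And>i. i \<in> A \<Longrightarrow> fdeg_le n (f i)) \<Longrightarrow> fdeg_le n (\<Sum>i\<in>A. f i)"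
  by (induction A rule: infinite_finite_induct) (auto intro: fdeg_le_add)

section \<open>Substitution into rational functions\<close>

lemma rconst_0 [simp]: "rconst 0 = 0"
  by (simp add: rconst_def Zero_fract_def)

lemma rconst_1 [simp]: "rconst 1 = 1"
  by (simp add: rconst_def One_fract_def one_pCons[symmetric])

lemma rconst_add: "rconst (a + b) = rconst a + rconst b"
  by (simp add: rconst_def)

lemma rconst_mult: "rconst (a * b) = rconst a * rconst b"
  by (simp add: rconst_def mult.commute)

lemma rconst_uminus: "rconst (- a) = - rconst a"
  by (simp add: rconst_def)

lemma rconst_diff: "rconst (a - b) = rconst a - rconst b"
  by (simp add: rconst_def)

lemma rconst_power: "rconst (a ^ n) = rconst a ^ n"
  by (induction n) (simp_all add: rconst_mult)

lemma rconst_eq_0_iff [simp]: "rconst a = 0 \<longleftrightarrow> a = 0"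
  by (simp add: rconst_def Fract_eq_0_iff)

lemma rconst_eq_to_fract: "rconst c = to_fract [:c:]"
  by (simp add: rconst_def to_fract_def)

lemma has_fdeg_rconst: "c \<noteq> 0 \<Longrightarrow> has_fdeg 0 (rconst (c::'a::field_gcd))"
  by (simp add: rconst_def has_fdeg_Fract)

lemma fdeg_le_rconst: "fdeg_le 0 (rconst (c::'a::field_gcd))"
  by (simp add: rconst_def fdeg_le_Fract)

lemma fdeg_le_rconst_mult: "fdeg_le n f \<Longrightarrow> fdeg_le n (rconst c * f)"
  using fdeg_le_mult[OF fdeg_le_rconst] by fastforce

lemma has_fdeg_rconst_mult_iff:
  assumes "c \<noteq> 0"
  shows "has_fdeg n (rconst c * f) \<longleftrightarrow> has_fdeg n f"
proof
  assume "has_fdeg n (rconst c * f)"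
  then have "has_fdeg (0 + n) (rconst (inverse c) * (rconst c * f))"
    using assms by (intro has_fdeg_mult has_fdeg_rconst) auto
  then show "has_fdeg n f"
    using assms by (simp add: rconst_mult[symmetric] mult.assoc[symmetric])
qed (use has_fdeg_mult[OF has_fdeg_rconst[OF assms]] in fastforce)

lemma has_fdeg_rX: "has_fdeg 1 (rX :: 'a::field_gcd poly fract)"
  by (simp add: rX_def has_fdeg_Fract)

lemma peval_0 [simp]: "peval 0 z = 0"
  by (simp add: peval_def)

lemma peval_pCons: "peval (pCons a q) z = rconst a + z * peval q z"
  by (simp add: peval_def map_poly_pCons)

lemma peval_const [simp]: "peval [:a:] z = rconst a"
  by (simp add: peval_pCons)

lemma peval_add: "peval (p + q) z = peval p z + peval q z"
proof (induction p arbitrary: q rule: pCons_induct)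
  case (pCons a p)
  then show ?case
    by (cases q) (simp add: peval_pCons rconst_add algebra_simps)
qed simp

lemma peval_smult: "peval (smult a q) z = rconst a * peval q z"
  by (induction q) (simp_all add: peval_pCons rconst_mult algebra_simps)

lemma peval_mult: "peval (p * q) z = peval p z * peval q z"
  by (induction p) (simp_all add: peval_add peval_smult peval_pCons algebra_simps)

lemma peval_1 [simp]: "peval 1 z = 1"
  using peval_const[of 1 z] by (simp add: one_pCons[symmetric])

lemma peval_rX: "peval q rX = to_fract q"
proof (induction q)
  case (pCons a q)
  have "pCons a q = [:a:] + [:0, 1:] * q" by simp
  then show ?case
    using pCons by (simp add: peval_pCons rconst_def rX_def to_fract_def)
qed simp

lemma has_fdeg_peval:
  fixes z :: "'a::field_gcd poly fract"
  assumes z: "has_fdeg n z" "n > 0" and "q \<noteq> 0"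
  shows "has_fdeg (int (degree q) * n) (peval q z)"
  using \<open>q \<noteq> 0\<close>
proof (induction q rule: pCons_induct)
  case (pCons a q)
  show ?case
  proof (cases "q = 0")
    case True
    then show ?thesis using pCons.hyps by (simp add: has_fdeg_rconst)
  next
    case False
    have "has_fdeg (n + int (degree q) * n) (z * peval q z)"
      using has_fdeg_mult[OF z(1) pCons.IH[OF False]] .
    moreover have "0 < n + int (degree q) * n" using z(2) by (simp add: add_pos_nonneg)
    ultimately have "has_fdeg (n + int (degree q) * n) (rconst a + z * peval q z)"
      by (intro has_fdeg_add'[OF fdeg_le_rconst])
    then show ?thesis using False by (simp add: peval_pCons algebra_simps)
  qed
qed simp

lemma fdeg_le_peval: "fdeg_le 0 z \<Longrightarrow> fdeg_le 0 (peval q z)"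
proof (induction q)
  case (pCons a q)
  then have "fdeg_le (0 + 0) (z * peval q z)" by (intro fdeg_le_mult)
  then show ?case by (simp add: peval_pCons fdeg_le_add fdeg_le_rconst)
qed simp

lemma fdeg_le_peval_minus_limit:
  fixes z :: "'a::field_gcd poly fract"
  assumes z: "fdeg_le (-1) (z - rconst t)"
  shows "fdeg_le (-1) (peval q z - rconst (poly q t))"
proof (induction q)
  case (pCons a q)
  define s where "s = z - rconst t"
  define s' where "s' = peval q z - rconst (poly q t)"
  have "peval (pCons a q) z - rconst (poly (pCons a q) t)
      = rconst t * s' + s * rconst (poly q t) + s * s'"
    by (simp add: s_def s'_def peval_pCons rconst_add rconst_mult algebra_simps)
  moreover have "fdeg_le (0 + -1) (rconst t * s')"
    using fdeg_le_rconst pCons.IH by (intro fdeg_le_mult) (simp_all add: s'_def)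
  moreover have "fdeg_le (-1 + 0) (s * rconst (poly q t))"
    using z fdeg_le_rconst by (intro fdeg_le_mult) (simp_all add: s_def)
  moreover have "fdeg_le (-1 + -1) (s * s')"
    using z pCons.IH by (intro fdeg_le_mult) (simp_all add: s_def s'_def)
  ultimately show ?case by (auto intro!: fdeg_le_add elim: fdeg_le_mono)
qed simp

text \<open>Substituting such an m is a ring homomorphism: rcomp _ m evaluates the reduced numerator
  and denominator at m, and the denominator must not become 0.\<close>

definition transcendental :: "'a::field_gcd poly fract \<Rightarrow> bool" where
  "transcendental m \<longleftrightarrow> (\<forall>b. b \<noteq> 0 \<longrightarrow> peval b m \<noteq> 0)"

lemma transcendental_rX: "transcendental rX"
  by (simp add: transcendental_def peval_rX)

context
  fixes m :: "'a::field_gcd poly fract"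
  assumes m: "transcendental m"
begin

lemma rcomp_Fract:
  assumes b: "b \<noteq> 0"
  shows "rcomp (Fract a b) m = peval a m / peval b m"
proof -
  obtain a' b' where q: "quot_of_fract (Fract a b) = (a', b')"
    by (cases "quot_of_fract (Fract a b)")
  have b': "b' \<noteq> 0" using snd_quot_of_fract_nonzero[of "Fract a b"] q by simp
  have "Fract a' b' = Fract a b" using Fract_quot_of_fract[of "Fract a b"] q by simp
  then have "a' * b = a * b'" using b b' by (simp add: eq_fract)
  then have "peval a' m * peval b m = peval a m * peval b' m"
    by (metis peval_mult)
  moreover have "peval b m \<noteq> 0" "peval b' m \<noteq> 0" using m b b' by (auto simp: transcendental_def)
  ultimately show ?thesis by (simp add: rcomp_def q field_simps)
qed

lemma rcomp_add: "rcomp (f + g) m = rcomp f m + rcomp g m"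
proof -
  obtain a b where f: "f = Fract a b" "b \<noteq> 0" by (cases f)
  obtain c e where g: "g = Fract c e" "e \<noteq> 0" by (cases g)
  have "peval b m \<noteq> 0" "peval e m \<noteq> 0" using m f g by (auto simp: transcendental_def)
  then show ?thesis using f g by (simp add: rcomp_Fract peval_add peval_mult field_simps)
qed

lemma rcomp_mult: "rcomp (f * g) m = rcomp f m * rcomp g m"
proof -
  obtain a b where f: "f = Fract a b" "b \<noteq> 0" by (cases f)
  obtain c e where g: "g = Fract c e" "e \<noteq> 0" by (cases g)
  show ?thesis using f g by (simp add: rcomp_Fract peval_mult)
qed

lemma rcomp_rconst: "rcomp (rconst c) m = rconst c"
  using rcomp_Fract[of 1 "[:c:]"] by (simp add: rconst_def)

lemma rcomp_0 [simp]: "rcomp 0 m = 0"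
  using rcomp_rconst[of 0] by simp

lemma rcomp_1 [simp]: "rcomp 1 m = 1"
  using rcomp_rconst[of 1] by simp

lemma rcomp_rX: "rcomp rX m = m"
  using rcomp_Fract[of 1 "[:0, 1:]"] by (simp add: rX_def peval_pCons)

lemma rcomp_diff: "rcomp (f - g) m = rcomp f m - rcomp g m"
  by (metis add_diff_cancel diff_add_cancel rcomp_add)

lemma rcomp_inverse: "rcomp (inverse f) m = inverse (rcomp f m)"
proof -
  obtain a b where f: "f = Fract a b" "b \<noteq> 0" by (cases f)
  then show ?thesis
    by (cases "a = 0") (simp_all add: rcomp_Fract fract_collapse)
qed

lemma rcomp_divide: "rcomp (f / g) m = rcomp f m / rcomp g m"
  by (simp add: divide_inverse rcomp_mult rcomp_inverse)

lemma rcomp_power: "rcomp (f ^ n) m = rcomp f m ^ n"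
  by (induction n) (simp_all add: rcomp_mult)

lemma rcomp_peval: "rcomp (peval q z) m = peval q (rcomp z m)"
  by (induction q) (simp_all add: peval_pCons rcomp_add rcomp_mult rcomp_rconst)

lemma rcomp_sum: "rcomp (\<Sum>i\<in>A. f i) m = (\<Sum>i\<in>A. rcomp (f i) m)"
  by (induction A rule: infinite_finite_induct) (simp_all add: rcomp_add)

lemma rcomp_eq_0_iff: "rcomp f m = 0 \<longleftrightarrow> f = 0"
proof -
  obtain a b where f: "f = Fract a b" "b \<noteq> 0" by (cases f)
  have "peval a m = 0 \<longleftrightarrow> a = 0" using m by (auto simp: transcendental_def)
  then show ?thesis using f m by (simp add: rcomp_Fract Fract_eq_0_iff transcendental_def)
qed

lemma transcendental_rcomp:
  assumes "transcendental n"
  shows "transcendental (rcomp n m)"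
  using assms by (simp add: transcendental_def rcomp_peval[symmetric] rcomp_eq_0_iff)

end

lemma rcomp_rcomp:
  assumes "transcendental n" "transcendental m"
  shows "rcomp (rcomp f n) m = rcomp f (rcomp n m)"
proof -
  obtain a b where "f = Fract a b" "b \<noteq> 0" by (cases f)
  then show ?thesis
    using assms transcendental_rcomp[OF assms(2,1)]
    by (simp add: rcomp_Fract rcomp_divide rcomp_peval)
qed

lemma rcomp_rX_right: "rcomp f rX = f"
proof -
  obtain a b where "f = Fract a b" "b \<noteq> 0" by (cases f)
  then show ?thesis
    by (simp add: rcomp_Fract[OF transcendental_rX] peval_rX to_fract_def)
qed

section \<open>Moebius transformations\<close>

lemma linear_eq_Fract: "rconst u * rX + rconst v = Fract [:v, u:] 1"
  by (simp add: rconst_def rX_def)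

lemma mobius_Fract:
  assumes "c \<noteq> 0 \<or> e \<noteq> 0"
  shows "mobius a b c e = Fract [:b, a:] [:e, c:]"
  using assms by (auto simp: mobius_def linear_eq_Fract)

lemma mobius_minus_rconst:
  assumes "c \<noteq> 0 \<or> e \<noteq> 0"
  shows "mobius a b c e - rconst t = mobius (a - t * c) (b - t * e) c e"
proof -
  have "rconst c * rX + rconst e \<noteq> (0::'a poly fract)"
    using assms by (auto simp: linear_eq_Fract Fract_eq_0_iff)
  then show ?thesis
    unfolding mobius_def by (simp add: field_simps rconst_diff rconst_mult)
qed

lemma inverse_mobius: "1 / mobius a b c e = mobius c e a b"
  by (simp add: mobius_def)

lemma mobius_scalar_eq_rX: "a \<noteq> 0 \<Longrightarrow> mobius a 0 0 a = (rX :: 'a::field_gcd poly fract)"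
  by (simp add: mobius_def)

lemma mobius_scale:
  assumes "k \<noteq> 0"
  shows "mobius (k * a) (k * b) (k * c) (k * e) = mobius a b c e"
proof -
  have "mobius (k * a) (k * b) (k * c) (k * e)
      = (rconst k * (rconst a * rX + rconst b)) / (rconst k * (rconst c * rX + rconst e))"
    by (simp add: mobius_def rconst_mult algebra_simps)
  then show ?thesis using assms by (simp add: mobius_def)
qed

lemma has_fdeg_mobius_affine: "a * e \<noteq> 0 \<Longrightarrow> has_fdeg 1 (mobius a b 0 e)"
  by (simp add: mobius_Fract has_fdeg_Fract)

lemma fdeg_le_mobius: "c \<noteq> 0 \<Longrightarrow> fdeg_le 0 (mobius a b c e)"
  by (simp add: mobius_Fract fdeg_le_Fract)

lemma fdeg_le_mobius_minus_limit:
  assumes "c \<noteq> 0"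
  shows "fdeg_le (-1) (mobius a b c e - rconst (a / c))"
proof -
  have "mobius a b c e - rconst (a / c) = mobius 0 (b - a / c * e) c e"
    using assms by (simp add: mobius_minus_rconst)
  then show ?thesis using assms by (simp add: mobius_Fract fdeg_le_Fract)
qed

lemma transcendental_mobius:
  fixes a b c e :: "'a::field_gcd"
  assumes alg_closed: "\<forall>q::'a poly. degree q > 0 \<longrightarrow> (\<exists>x. poly q x = 0)"
    and det: "a * e - b * c \<noteq> 0"
  shows "transcendental (mobius a b c e)"
  unfolding transcendental_def
proof (intro allI impI)
  fix q :: "'a poly"
  assume "q \<noteq> 0"
  then show "peval q (mobius a b c e) \<noteq> 0"
  proof (induction "degree q" arbitrary: q rule: less_induct)
    case less
    show ?case
    proof (cases "degree q = 0")
      case True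
      then show ?thesis using less.prems by (metis degree_eq_zeroE peval_const rconst_eq_0_iff pCons_0_0)
    next
      case False
      then obtain x where "poly q x = 0" using alg_closed by blast
      then obtain q1 where q1: "q = [:- x, 1:] * q1" by (metis dvdE poly_eq_0_iff_dvd)
      with less.prems have "q1 \<noteq> 0" by auto
      then have "degree q = Suc (degree q1)" using q1 degree_mult_eq[of "[:- x, 1:]" q1] by simp
      then have "peval q1 (mobius a b c e) \<noteq> 0" using less \<open>q1 \<noteq> 0\<close> by simp
      moreover have "peval [:- x, 1:] (mobius a b c e) \<noteq> 0"
      proof -
        have ce: "c \<noteq> 0 \<or> e \<noteq> 0" using det by auto
        have "[:b - x * e, a - x * c:] \<noteq> 0" using det by (auto simp: algebra_simps)
        moreover have "mobius a b c e - rconst x = Fract [:b - x * e, a - x * c:] [:e, c:]"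
          using mobius_minus_rconst[OF ce, of a b x] mobius_Fract[OF ce, of "a - x * c"] by simp
        moreover have "[:e, c:] \<noteq> 0" using ce by auto
        ultimately have "mobius a b c e - rconst x \<noteq> 0"
          by (simp add: Fract_eq_0_iff)
        then show ?thesis by (simp add: peval_pCons rconst_uminus)
      qed
      ultimately show ?thesis unfolding q1 peval_mult by simp
    qed
  qed
qed

lemma transcendental_mobius_at:
  fixes t :: "'a::field_gcd"
  assumes alg_closed: "\<forall>q::'a poly. degree q > 0 \<longrightarrow> (\<exists>x. poly q x = 0)"
  shows "transcendental (mobius t 1 1 0)"
  using transcendental_mobius[OF alg_closed, of t 0 1 1] by simp

lemma rcomp_mobius:
  assumes N: "transcendental (mobius A B C D)" and det: "A * D - B * C \<noteq> 0"
  shows "rcomp (mobius a b c e) (mobius A B C D)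
       = mobius (a * A + b * C) (a * B + b * D) (c * A + e * C) (c * B + e * D)"
proof -
  define L1 where "L1 = rconst A * rX + rconst B"
  define L2 where "L2 = rconst C * rX + rconst D"
  have "L2 \<noteq> 0" using det by (auto simp: L2_def linear_eq_Fract Fract_eq_0_iff)
  have lin: "rconst u * (L1 / L2) + rconst v
      = (rconst (u * A + v * C) * rX + rconst (u * B + v * D)) / L2" for u v
    using \<open>L2 \<noteq> 0\<close> by (simp add: L1_def L2_def rconst_add rconst_mult field_simps)
  have N_eq: "mobius A B C D = L1 / L2" by (simp add: mobius_def L1_def L2_def)
  have "rcomp (mobius a b c e) (mobius A B C D)
      = (rconst a * (L1 / L2) + rconst b) / (rconst c * (L1 / L2) + rconst e)"
    unfolding mobius_def[of a b c e] N_eq[symmetric]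
    by (simp add: rcomp_divide[OF N] rcomp_add[OF N] rcomp_mult[OF N] rcomp_rconst[OF N]
        rcomp_rX[OF N])
  also have "\<dots> = mobius (a * A + b * C) (a * B + b * D) (c * A + e * C) (c * B + e * D)"
    unfolding lin mobius_def using \<open>L2 \<noteq> 0\<close> by simp
  finally show ?thesis .
qed

lemma peval_mobius_pole:
  fixes x y z w :: "'a::field_gcd"
  assumes "degree P > 0" and "x * w - y * z \<noteq> 0"
  shows "z = 0 \<Longrightarrow> has_fdeg (degree P) (peval P (mobius x y z w))"
    and "z \<noteq> 0 \<Longrightarrow> fdeg_le 0 (peval P (mobius x y z w))"
proof -
  assume "z = 0"
  then have "has_fdeg 1 (mobius x y z w)" using assms(2) by (simp add: has_fdeg_mobius_affine)
  then show "has_fdeg (degree P) (peval P (mobius x y z w))"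
    using has_fdeg_peval[of 1 _ P] assms(1) by fastforce
qed (intro fdeg_le_peval fdeg_le_mobius)

lemma rcomp_inverse_shift:
  assumes "transcendental (mobius a b c e)" and "c \<noteq> 0 \<or> e \<noteq> 0"
  shows "rcomp (1 / (rX - rconst t)) (mobius a b c e) = mobius c e (a - t * c) (b - t * e)"
  using assms
  by (simp add: rcomp_divide rcomp_diff rcomp_rX rcomp_rconst mobius_minus_rconst inverse_mobius)

lemma fdeg_le_inverse_shift: "fdeg_le (-1) (1 / (rX - rconst t) :: 'a::field_gcd poly fract)"
proof -
  have "1 / (rX - rconst t) = Fract 1 [:- t, 1:]"
    by (simp add: rX_def rconst_def One_fract_def)
  then show ?thesis by (simp add: fdeg_le_Fract)
qed

lemma fdeg_le_peval_inverse_shift: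
  assumes "coeff P 0 = 0"
  shows "fdeg_le (-1) (peval P (1 / (rX - rconst (t::'a::field_gcd))))"
proof -
  have "fdeg_le (-1) (1 / (rX - rconst t) - rconst 0)" using fdeg_le_inverse_shift by simp
  then show ?thesis using fdeg_le_peval_minus_limit[of _ 0 P] assms by (simp add: poly_0_coeff_0)
qed

text \<open>Pulling back a sum of polar parts at distinct centres by a Moebius transformation N with
  N(\<infinity>) = a / c: only the part centred at a / c keeps a pole at \<infinity>.\<close>

lemma polar_parts_pullback:
  fixes a b c e :: "'a::field_gcd" and ctr :: "nat \<Rightarrow> 'a"
  assumes "finite I" "inj_on ctr I" "\<And>i. i \<in> I \<Longrightarrow> degree (P i) > 0" and det: "a * e - b * c \<noteq> 0"
  defines "S \<equiv> \<Sum>i\<in>I. peval (P i) (mobius c e (a - ctr i * c) (b - ctr i * e))"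
  shows "i \<in> I \<Longrightarrow> a = ctr i * c \<Longrightarrow> has_fdeg (degree (P i)) S"
    and "(\<forall>i\<in>I. a \<noteq> ctr i * c) \<Longrightarrow> fdeg_le 0 S"
proof -
  define T where "T i = peval (P i) (mobius c e (a - ctr i * c) (b - ctr i * e))" for i
  have det': "c * (b - t * e) - e * (a - t * c) \<noteq> 0" for t
    using det by (simp add: algebra_simps)
  have bounded: "fdeg_le 0 (T i)" if "i \<in> I" "a \<noteq> ctr i * c" for i
    using peval_mobius_pole(2)[OF assms(3) det'] that by (simp add: T_def)
  show "(\<forall>i\<in>I. a \<noteq> ctr i * c) \<Longrightarrow> fdeg_le 0 S"
    unfolding S_def T_def[symmetric] by (auto intro: fdeg_le_sum bounded)
  assume i: "i \<in> I" and a: "a = ctr i * c"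
  then have "c \<noteq> 0" using det by auto
  have "fdeg_le 0 (T j)" if "j \<in> I - {i}" for j
    using that a i \<open>c \<noteq> 0\<close> \<open>inj_on ctr I\<close> by (intro bounded) (auto simp: inj_on_def)
  then have "fdeg_le 0 (\<Sum>j\<in>I - {i}. T j)" by (rule fdeg_le_sum)
  moreover have "has_fdeg (degree (P i)) (T i)"
    using peval_mobius_pole(1)[OF assms(3)[OF i] det'[of "ctr i"]] a by (simp add: T_def)
  ultimately have "has_fdeg (degree (P i)) (T i + (\<Sum>j\<in>I - {i}. T j))"
    using assms(3)[OF i] by (intro has_fdeg_add) auto
  then show "has_fdeg (degree (P i)) S"
    unfolding S_def T_def[symmetric] sum.remove[OF \<open>finite I\<close> i] .
qed

section \<open>Artin--Schreier terms\<close>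

definition coprime_pole_order :: "nat \<Rightarrow> 'a::field_gcd poly fract \<Rightarrow> bool" where
  "coprime_pole_order p f \<longleftrightarrow> (\<forall>k>0. has_fdeg k f \<longrightarrow> \<not> int p dvd k)"

lemma fdeg_le_artin_schreier: "fdeg_le 0 h \<Longrightarrow> fdeg_le 0 (h ^ p - h)"
  using fdeg_le_power[of 0 h p] by (simp add: fdeg_le_diff)

lemma has_fdeg_artin_schreier:
  assumes "p > 1" "has_fdeg m h" "m > 0"
  shows "has_fdeg (int p * m) (h ^ p - h)"
  using assms by (intro has_fdeg_diff[OF has_fdeg_power has_fdeg_imp_fdeg_le]) auto

lemma artin_schreier_bounded:
  assumes "p > 1" and "coprime_pole_order p (h ^ p - h)"
  shows "fdeg_le 0 h"
proof (rule ccontr)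
  assume "\<not> fdeg_le 0 h"
  then obtain m where "m > 0" "has_fdeg m h" using fdeg_le_or_has_fdeg by blast
  then have "has_fdeg (int p * m) (h ^ p - h)" "int p * m > 0"
    using assms(1) has_fdeg_artin_schreier by auto
  then show False using assms(2) by (auto simp: coprime_pole_order_def)
qed

text \<open>Adding an Artin--Schreier term h ^ p - h cannot change a pole order at \<infinity> that is prime to
  p, because the pole order of such a term is either divisible by p or nonpositive.\<close>

lemma has_fdeg_mod_artin_schreier:
  assumes eq: "A = rconst lam * B + (h ^ p - h)" and "lam \<noteq> 0" "p > 1"
    and A: "has_fdeg e A" "e > 0" "\<not> int p dvd e" and B: "coprime_pole_order p B"
  shows "has_fdeg e B"
proof (cases "fdeg_le 0 h")
  case True
  then have "has_fdeg e (A - (h ^ p - h))"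
    using has_fdeg_diff[OF A(1) fdeg_le_artin_schreier A(2)] by simp
  then show ?thesis using eq \<open>lam \<noteq> 0\<close> by (simp add: has_fdeg_rconst_mult_iff)
next
  case False
  then obtain m where "m > 0" "has_fdeg m h" using fdeg_le_or_has_fdeg by blast
  then have X: "has_fdeg (int p * m) (h ^ p - h)" "int p * m > 0"
    using has_fdeg_artin_schreier \<open>p > 1\<close> by auto
  show ?thesis
  proof (cases "fdeg_le 0 (rconst lam * B)")
    case True
    then have "has_fdeg (int p * m) A" unfolding eq using X by (intro has_fdeg_add')
    then show ?thesis using A has_fdeg_unique by fastforce
  next
    case False
    then obtain k where k: "k > 0" "has_fdeg k (rconst lam * B)" using fdeg_le_or_has_fdeg by blast
    then have "has_fdeg k B" using \<open>lam \<noteq> 0\<close> by (simp add: has_fdeg_rconst_mult_iff)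
    then have "k \<noteq> int p * m" using B k(1) by (auto simp: coprime_pole_order_def)
    then have "has_fdeg (max k (int p * m)) A"
      unfolding eq using k(2) X(1) by (rule has_fdeg_add_distinct[rotated 2])
    then have "e = k" using A has_fdeg_unique[OF A(1)] by (auto simp: max_def split: if_splits)
    then show ?thesis using \<open>has_fdeg k B\<close> by simp
  qed
qed

text \<open>The principal part of f at \<infinity> contains no monomial whose exponent is divisible by p.\<close>

definition as_reduced :: "nat \<Rightarrow> 'a::field_gcd poly fract \<Rightarrow> bool" where
  "as_reduced p f \<longleftrightarrow> (\<exists>Q. (\<forall>i. p dvd i \<longrightarrow> coeff Q i = 0) \<and> fdeg_le 0 (f - to_fract Q))"

lemma as_reduced_to_fract: "(\<forall>i. p dvd i \<longrightarrow> coeff Q i = 0) \<Longrightarrow> as_reduced p (to_fract Q)"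
  unfolding as_reduced_def by auto

lemma as_reduced_bounded: "fdeg_le 0 f \<Longrightarrow> as_reduced p f"
  unfolding as_reduced_def by (rule exI[of _ 0]) simp

lemma as_reduced_add:
  assumes "as_reduced p f" "as_reduced p g"
  shows "as_reduced p (f + g)"
proof -
  obtain Q R where "\<forall>i. p dvd i \<longrightarrow> coeff Q i = 0" "fdeg_le 0 (f - to_fract Q)"
    "\<forall>i. p dvd i \<longrightarrow> coeff R i = 0" "fdeg_le 0 (g - to_fract R)"
    using assms by (auto simp: as_reduced_def)
  moreover have "fdeg_le 0 (f + g - to_fract (Q + R))"
    using fdeg_le_add[OF \<open>fdeg_le 0 (f - to_fract Q)\<close> \<open>fdeg_le 0 (g - to_fract R)\<close>]
    by (simp add: to_fract_add algebra_simps)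
  ultimately show ?thesis unfolding as_reduced_def
    by (intro exI[of _ "Q + R"]) auto
qed

lemma as_reduced_rconst_mult:
  assumes "as_reduced p f"
  shows "as_reduced p (rconst c * f)"
proof -
  obtain Q where "\<forall>i. p dvd i \<longrightarrow> coeff Q i = 0" "fdeg_le 0 (f - to_fract Q)"
    using assms by (auto simp: as_reduced_def)
  moreover have "rconst c * f - to_fract (smult c Q) = rconst c * (f - to_fract Q)"
    by (simp add: rconst_eq_to_fract to_fract_mult[symmetric] right_diff_distrib)
  ultimately show ?thesis unfolding as_reduced_def
    by (intro exI[of _ "smult c Q"]) (auto intro: fdeg_le_rconst_mult)
qed

lemma as_reduced_diff: "as_reduced p f \<Longrightarrow> as_reduced p g \<Longrightarrow> as_reduced p (f - rconst c * g)"
  using as_reduced_add[OF _ as_reduced_rconst_mult, of p f g "- c"] by (simp add: rconst_uminus)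

lemma as_reduced_sum: "(\<And>i. i \<in> A \<Longrightarrow> as_reduced p (f i)) \<Longrightarrow> as_reduced p (\<Sum>i\<in>A. f i)"
  by (induction A rule: infinite_finite_induct) (auto intro: as_reduced_add as_reduced_bounded)

lemma as_reduced_coprime_pole_order:
  assumes "as_reduced p f"
  shows "coprime_pole_order p f"
  unfolding coprime_pole_order_def
proof (intro allI impI)
  fix k :: int assume "k > 0" "has_fdeg k f"
  obtain Q where Q: "\<forall>i. p dvd i \<longrightarrow> coeff Q i = 0" "fdeg_le 0 (f - to_fract Q)"
    using assms by (auto simp: as_reduced_def)
  have "Q \<noteq> 0"
    using Q(2) \<open>k > 0\<close> \<open>has_fdeg k f\<close> has_fdeg_not_fdeg_le by fastforce
  moreover have "degree Q \<noteq> 0"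
    using Q(1) \<open>Q \<noteq> 0\<close> by (metis degree_0_id dvd_0_right pCons_0_0)
  ultimately have "has_fdeg (degree Q) (to_fract Q + (f - to_fract Q))"
    using Q(2) by (intro has_fdeg_add has_fdeg_to_fract) auto
  then have "k = degree Q" using \<open>has_fdeg k f\<close> has_fdeg_unique by fastforce
  moreover have "\<not> p dvd degree Q" using Q(1) \<open>Q \<noteq> 0\<close> by auto
  ultimately show "\<not> int p dvd k" by (simp add: int_dvd_int_iff)
qed

lemma has_fdeg_peval_mobius_at:
  assumes "poly a t \<noteq> 0"
  shows "has_fdeg 0 (peval a (mobius t 1 1 0))"
proof -
  have "fdeg_le (-1) (mobius t 1 1 0 - rconst t)"
    by (rule fdeg_le_mobius_minus_limit[of 1, simplified])
  then have "fdeg_le (-1) (peval a (mobius t 1 1 0) - rconst (poly a t))"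
    by (rule fdeg_le_peval_minus_limit)
  then have "has_fdeg 0 (rconst (poly a t) + (peval a (mobius t 1 1 0) - rconst (poly a t)))"
    using assms by (intro has_fdeg_add has_fdeg_rconst) auto
  then show ?thesis by simp
qed

lemma fdeg_le_peval_mobius_at_root:
  assumes "poly b t = 0"
  shows "fdeg_le (-1) (peval b (mobius t 1 1 0))"
proof -
  obtain b1 where b1: "b = [:- t, 1:] * b1" using assms by (metis dvdE poly_eq_0_iff_dvd)
  have "mobius t 1 1 0 - rconst t = mobius 0 1 1 0" by (simp add: mobius_minus_rconst)
  also have "\<dots> = 1 / rX" by (simp add: mobius_def)
  finally have "has_fdeg (-1) (peval [:- t, 1:] (mobius t 1 1 0))"
    using has_fdeg_inverse[OF has_fdeg_rX] by (simp add: peval_pCons rconst_uminus divide_inverse)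
  moreover have "fdeg_le 0 (peval b1 (mobius t 1 1 0))" by (intro fdeg_le_peval fdeg_le_mobius) simp
  ultimately have "fdeg_le (-1 + 0) (peval b (mobius t 1 1 0))"
    unfolding b1 peval_mult by (intro fdeg_le_mult[OF has_fdeg_imp_fdeg_le]) auto
  then show ?thesis by simp
qed

text \<open>mobius t 1 1 0 is t + 1 / x; substituting it moves a pole at t to \<infinity>.\<close>

lemma pole_pullback_unbounded:
  fixes h :: "'a::field_gcd poly fract"
  assumes alg_closed: "\<forall>q::'a poly. degree q > 0 \<longrightarrow> (\<exists>x. poly q x = 0)"
    and root: "poly (snd (quot_of_fract h)) t = 0"
  shows "\<not> fdeg_le 0 (rcomp h (mobius t 1 1 0))"
proof -
  obtain a b where ab: "quot_of_fract h = (a, b)" by (cases "quot_of_fract h")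
  have "b \<noteq> 0" "coprime a b" "h = Fract a b"
    using ab snd_quot_of_fract_nonzero[of h] coprime_quot_of_fract[of h] Fract_quot_of_fract[of h]
    by auto
  have "poly b t = 0" using root ab by simp
  have "poly a t \<noteq> 0"
  proof
    assume "poly a t = 0"
    then have "[:- t, 1:] dvd a" "[:- t, 1:] dvd b"
      using \<open>poly b t = 0\<close> by (simp_all add: poly_eq_0_iff_dvd)
    then have "is_unit [:- t, 1:]" using \<open>coprime a b\<close> coprime_common_divisor by blast
    then show False by (simp add: is_unit_iff_degree)
  qed
  have T: "transcendental (mobius t 1 1 0)" by (rule transcendental_mobius_at[OF alg_closed])
  then have "peval b (mobius t 1 1 0) \<noteq> 0" using \<open>b \<noteq> 0\<close> by (simp add: transcendental_def)
  then obtain k where "k \<le> -1" "has_fdeg k (peval b (mobius t 1 1 0))"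
    using fdeg_le_peval_mobius_at_root[OF \<open>poly b t = 0\<close>] by (auto simp: fdeg_le_def has_fdeg_def)
  then have "has_fdeg (0 - k) (rcomp h (mobius t 1 1 0))"
    unfolding \<open>h = Fract a b\<close> rcomp_Fract[OF T \<open>b \<noteq> 0\<close>]
    using has_fdeg_peval_mobius_at[OF \<open>poly a t \<noteq> 0\<close>] by (intro has_fdeg_divide)
  then show ?thesis using \<open>k \<le> -1\<close> has_fdeg_not_fdeg_le by fastforce
qed

lemma artin_schreier_constant:
  fixes h :: "'a::field_gcd poly fract"
  assumes alg_closed: "\<forall>q::'a poly. degree q > 0 \<longrightarrow> (\<exists>x. poly q x = 0)"
    and "p > 1" and f: "f = h ^ p - h"
    and reduced: "as_reduced p f" "\<And>t. as_reduced p (rcomp f (mobius t 1 1 0))"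
  shows "\<exists>c. h = rconst c"
proof -
  obtain a b where ab: "quot_of_fract h = (a, b)" by (cases "quot_of_fract h")
  have "b \<noteq> 0" "h = Fract a b"
    using ab snd_quot_of_fract_nonzero[of h] Fract_quot_of_fract[of h] by auto
  have "poly b t \<noteq> 0" for t
  proof
    assume root: "poly b t = 0"
    have "rcomp f (mobius t 1 1 0) = rcomp h (mobius t 1 1 0) ^ p - rcomp h (mobius t 1 1 0)"
      using transcendental_mobius_at[OF alg_closed]
      by (simp add: f rcomp_diff rcomp_power)
    then have "fdeg_le 0 (rcomp h (mobius t 1 1 0))"
      using reduced(2) \<open>p > 1\<close> by (metis artin_schreier_bounded as_reduced_coprime_pole_order)
    then show False using pole_pullback_unbounded[OF alg_closed] root ab by auto
  qed
  then obtain b0 where "b = [:b0:]" using alg_closed by (metis degree_eq_zeroE gr0I)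
  moreover have "fdeg_le 0 h"
    using reduced(1) f \<open>p > 1\<close> artin_schreier_bounded as_reduced_coprime_pole_order by blast
  ultimately obtain a0 where "a = [:a0:]"
    using \<open>b \<noteq> 0\<close> \<open>h = Fract a b\<close> by (auto simp: fdeg_le_Fract elim: degree_eq_zeroE)
  then have "h = rconst (a0 / b0)"
    using \<open>b = [:b0:]\<close> \<open>b \<noteq> 0\<close> \<open>h = Fract a b\<close> by (simp add: rconst_def eq_fract)
  then show ?thesis ..
qed

section \<open>Pull-backs of the forms\<close>

lemma good_polyD:
  assumes "good_poly p n q"
  shows "degree q = n" and "n > 0" and "\<not> p dvd n" and "\<forall>i. p dvd i \<longrightarrow> coeff q i = 0"
  using assms by (auto simp: good_poly_def intro: Nat.gr0I)

text \<open>The polar parts at 0, 1 and \<theta> j get the indices 2, 3 and j, so that all of them can be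
  treated alike.\<close>

lemma form_fun_polar_parts:
  "form_fun r F G H J \<theta> = peval F rX +
     (\<Sum>i\<in>{2, 3} \<union> {4..r+1}. peval ((J(2 := G, 3 := H)) i) (1 / (rX - rconst ((\<theta>(2 := 0, 3 := 1)) i))))"
proof -
  have "(\<Sum>i\<in>{4..r+1}. peval ((J(2 := G, 3 := H)) i) (1 / (rX - rconst ((\<theta>(2 := 0, 3 := 1)) i))))
      = (\<Sum>j\<in>{4..r+1}. peval (J j) (1 / (rX - rconst (\<theta> j))))"
    by (intro sum.cong) auto
  then show ?thesis
    by (simp add: form_fun_def sum.union_disjoint add.assoc)
qed

context
  fixes p r :: nat and d :: "nat \<Rightarrow> nat" and F G H :: "'a::field_gcd poly"
    and J :: "nat \<Rightarrow> 'a poly" and \<theta> :: "nat \<Rightarrow> 'a"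
  assumes form: "good_form p r d F G H J \<theta>"
begin

lemma good_form_polar_parts:
  shows "inj_on (\<theta>(2 := 0, 3 := 1)) ({2, 3} \<union> {4..r+1})"
    and "i \<in> {2, 3} \<union> {4..r+1} \<Longrightarrow> good_poly p (d i) ((J(2 := G, 3 := H)) i)"
  using form by (auto simp: good_form_def inj_on_def)

lemma rcomp_form_fun:
  assumes N: "transcendental (mobius a b c e)" and det: "a * e - b * c \<noteq> 0"
  shows "rcomp (form_fun r F G H J \<theta>) (mobius a b c e) = peval F (mobius a b c e) +
    (\<Sum>i\<in>{2, 3} \<union> {4..r+1}. peval ((J(2 := G, 3 := H)) i)
        (mobius c e (a - (\<theta>(2 := 0, 3 := 1)) i * c) (b - (\<theta>(2 := 0, 3 := 1)) i * e)))"
proof -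
  have "c \<noteq> 0 \<or> e \<noteq> 0" using det by auto
  then show ?thesis
    unfolding form_fun_polar_parts rcomp_add[OF N] rcomp_sum[OF N] rcomp_peval[OF N] rcomp_rX[OF N]
    by (simp only: rcomp_inverse_shift[OF N])
qed

text \<open>N = mobius a b c e maps \<infinity> to a / c, or to \<infinity> if c = 0. The pole order at \<infinity> of the
  pull-back by N is the pole order of the form at N(\<infinity>).\<close>

lemma form_pullback_pole:
  fixes a b c e :: 'a
  assumes alg_closed: "\<forall>q::'a poly. degree q > 0 \<longrightarrow> (\<exists>x. poly q x = 0)"
    and det: "a * e - b * c \<noteq> 0"
  defines "R \<equiv> rcomp (form_fun r F G H J \<theta>) (mobius a b c e)"
  shows "c = 0 \<Longrightarrow> has_fdeg (d 1) R"
    and "i \<in> {2, 3} \<union> {4..r+1} \<Longrightarrow> a = (\<theta>(2 := 0, 3 := 1)) i * c \<Longrightarrow> has_fdeg (d i) R"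
    and "c \<noteq> 0 \<Longrightarrow> (\<forall>i\<in>{2, 3} \<union> {4..r+1}. a \<noteq> (\<theta>(2 := 0, 3 := 1)) i * c) \<Longrightarrow> fdeg_le 0 R"
proof -
  define S where "S = (\<Sum>i\<in>{2, 3} \<union> {4..r+1}. peval ((J(2 := G, 3 := H)) i)
        (mobius c e (a - (\<theta>(2 := 0, 3 := 1)) i * c) (b - (\<theta>(2 := 0, 3 := 1)) i * e)))"
  have R: "R = peval F (mobius a b c e) + S"
    unfolding R_def S_def by (rule rcomp_form_fun[OF transcendental_mobius[OF alg_closed det] det])
  have F: "degree F = d 1" "d 1 > 0" using form good_polyD by (auto simp: good_form_def)
  have I: "finite ({2, 3} \<union> {4..r+1} :: nat set)" by simp
  have P: "i \<in> {2, 3} \<union> {4..r+1} \<Longrightarrow> degree ((J(2 := G, 3 := H)) i) = d i \<and> d i > 0" for i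
    using good_polyD(1,2)[OF good_form_polar_parts(2)] by blast
  note S = polar_parts_pullback[where I = "{2, 3} \<union> {4..r+1}" and ctr = "\<theta>(2 := 0, 3 := 1)"
      and P = "J(2 := G, 3 := H)", OF I good_form_polar_parts(1) _ det, folded S_def]
  show "c = 0 \<Longrightarrow> has_fdeg (d 1) R"
  proof -
    assume "c = 0"
    then have "has_fdeg (d 1) (peval F (mobius a b c e))"
      using peval_mobius_pole(1)[of F a e b c] det F by simp
    moreover have "fdeg_le 0 S" using S(2) P det \<open>c = 0\<close> by auto
    ultimately show ?thesis unfolding R using F by (intro has_fdeg_add) auto
  qed
  show "has_fdeg (d i) R"
    if i: "i \<in> {2, 3} \<union> {4..r+1}" and a: "a = (\<theta>(2 := 0, 3 := 1)) i * c"
  proof -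
    have "c \<noteq> 0" using a det by auto
    then have "fdeg_le 0 (peval F (mobius a b c e))"
      using peval_mobius_pole(2)[of F a e b c] det F by simp
    moreover have "has_fdeg (d i) S" using S(1)[OF _ i a] P P[OF i] by force
    ultimately show ?thesis unfolding R using P[OF i] by (intro has_fdeg_add') auto
  qed
  show "fdeg_le 0 R"
    if "c \<noteq> 0" "\<forall>i\<in>{2, 3} \<union> {4..r+1}. a \<noteq> (\<theta>(2 := 0, 3 := 1)) i * c"
  proof -
    have "fdeg_le 0 (peval F (mobius a b c e))"
      using peval_mobius_pole(2)[of F a e b c] that det F by simp
    moreover have "fdeg_le 0 S" using S(2) P that by auto
    ultimately show ?thesis unfolding R by (rule fdeg_le_add)
  qed
qed

lemma form_pullback_pole_cases:
  fixes a b c e :: 'a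
  assumes alg_closed: "\<forall>q::'a poly. degree q > 0 \<longrightarrow> (\<exists>x. poly q x = 0)"
    and det: "a * e - b * c \<noteq> 0"
    and R: "has_fdeg k (rcomp (form_fun r F G H J \<theta>) (mobius a b c e))" "k > 0"
  shows "(c = 0 \<and> k = d 1) \<or>
    (c \<noteq> 0 \<and> (\<exists>i\<in>{2, 3} \<union> {4..r+1}. a = (\<theta>(2 := 0, 3 := 1)) i * c \<and> k = d i))"
proof (cases "c = 0")
  case True
  then show ?thesis using form_pullback_pole(1)[OF alg_closed det] R has_fdeg_unique by blast
next
  case False
  show ?thesis
  proof (cases "\<exists>i\<in>{2, 3} \<union> {4..r+1}. a = (\<theta>(2 := 0, 3 := 1)) i * c")
    case True
    then show ?thesis using False form_pullback_pole(2)[OF alg_closed det] R has_fdeg_unique by blast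
  next
    case none: False
    then have "fdeg_le 0 (rcomp (form_fun r F G H J \<theta>) (mobius a b c e))"
      using form_pullback_pole(3)[OF alg_closed det False] by blast
    then show ?thesis using R has_fdeg_not_fdeg_le by blast
  qed
qed

lemma form_pullback_coprime_pole:
  fixes a b c e :: 'a
  assumes alg_closed: "\<forall>q::'a poly. degree q > 0 \<longrightarrow> (\<exists>x. poly q x = 0)"
    and det: "a * e - b * c \<noteq> 0"
    and R: "has_fdeg k (rcomp (form_fun r F G H J \<theta>) (mobius a b c e))" "k > 0"
  shows "\<not> int p dvd k"
  using form_pullback_pole_cases[OF alg_closed det R] good_polyD(3)[OF good_form_polar_parts(2)]
    form good_polyD(3) by (fastforce simp: good_form_def)

lemma form_fun_minus_poly_part: "fdeg_le (-1) (form_fun r F G H J \<theta> - to_fract F)"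
proof -
  have "coeff ((J(2 := G, 3 := H)) i) 0 = 0" if "i \<in> {2, 3} \<union> {4..r+1}" for i
    using good_polyD(4)[OF good_form_polar_parts(2)[OF that]] by simp
  then show ?thesis
    unfolding form_fun_polar_parts peval_rX add_diff_cancel_left'
    by (intro fdeg_le_sum fdeg_le_peval_inverse_shift)
qed

lemma as_reduced_form_fun: "as_reduced p (form_fun r F G H J \<theta>)"
proof -
  have "as_reduced p (to_fract F + (form_fun r F G H J \<theta> - to_fract F))"
    using form form_fun_minus_poly_part
    by (intro as_reduced_add as_reduced_to_fract as_reduced_bounded)
      (auto simp: good_form_def good_polyD elim: fdeg_le_mono)
  then show ?thesis by simp
qed

lemma as_reduced_form_fun_pullback:
  assumes alg_closed: "\<forall>q::'a poly. degree q > 0 \<longrightarrow> (\<exists>x. poly q x = 0)"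
  shows "as_reduced p (rcomp (form_fun r F G H J \<theta>) (mobius t 1 1 0))"
proof -
  have polar: "as_reduced p (peval P (mobius 1 0 u 1))"
    if "\<forall>i. p dvd i \<longrightarrow> coeff P i = 0" for P :: "'a poly" and u
  proof (cases "u = 0")
    case True
    then show ?thesis using that by (simp add: mobius_scalar_eq_rX[of 1, simplified] peval_rX
        as_reduced_to_fract)
  next
    case False
    then show ?thesis by (intro as_reduced_bounded fdeg_le_peval fdeg_le_mobius)
  qed
  have "as_reduced p (peval F (mobius t 1 1 0))"
    by (intro as_reduced_bounded fdeg_le_peval fdeg_le_mobius) simp
  moreover have "as_reduced p (\<Sum>i\<in>{2, 3} \<union> {4..r+1}. peval ((J(2 := G, 3 := H)) i)
      (mobius 1 0 (t - (\<theta>(2 := 0, 3 := 1)) i) 1))"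
    by (intro as_reduced_sum polar good_polyD(4)[OF good_form_polar_parts(2)])
  ultimately show ?thesis
    using rcomp_form_fun[of t 1 1 0, OF transcendental_mobius_at[OF alg_closed]]
    by (simp add: as_reduced_add)
qed

end

lemma form_fun_diff_rconst:
  fixes F G H :: "'a::field_gcd poly"
  assumes form: "good_form p r d F G H J \<theta>" and form': "good_form p r d F' G' H' J' \<theta>'"
    and eq: "form_fun r F G H J \<theta> - rconst lam * form_fun r F' G' H' J' \<theta>' = rconst k"
  shows "k = 0"
proof -
  define Q where "Q = F - smult lam F' - [:k:]"
  have "to_fract Q = rconst lam * (form_fun r F' G' H' J' \<theta>' - to_fract F')
      - (form_fun r F G H J \<theta> - to_fract F)"
    using eq by (simp add: Q_def to_fract_diff rconst_eq_to_fract to_fract_mult[symmetric]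
        algebra_simps)
  also have "fdeg_le (-1) \<dots>"
    using form_fun_minus_poly_part[OF form] form_fun_minus_poly_part[OF form']
    by (intro fdeg_le_diff[OF fdeg_le_rconst_mult])
  finally have "Q = 0" by (simp add: fdeg_le_to_fract_iff)
  then have "coeff F 0 - lam * coeff F' 0 - k = 0" by (metis Q_def coeff_0 coeff_diff coeff_pCons_0 coeff_smult)
  moreover have "coeff F 0 = 0" "coeff F' 0 = 0"
    using form form' good_polyD(4) by (auto simp: good_form_def)
  ultimately show ?thesis by simp
qed

section \<open>Isomorphisms between the curves\<close>

lemma transforms_pole_transfer:
  fixes \<alpha> \<beta> \<gamma> \<delta> a b c e :: "'a::field_gcd"
  assumes alg_closed: "\<forall>q::'a poly. degree q > 0 \<longrightarrow> (\<exists>x. poly q x = 0)"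
    and form': "good_form p r d F' G' H' J' \<theta>'"
    and "p > 1" "lam \<noteq> 0" and det: "\<alpha> * \<delta> - \<beta> * \<gamma> \<noteq> 0" "a * e - b * c \<noteq> 0"
    and eq: "rcomp f (mobius \<alpha> \<beta> \<gamma> \<delta>) = rconst lam * form_fun r F' G' H' J' \<theta>' + h ^ p - h"
    and pole: "has_fdeg k (rcomp f (rcomp (mobius \<alpha> \<beta> \<gamma> \<delta>) (mobius a b c e)))"
      "k > 0" "\<not> int p dvd k"
  shows "has_fdeg k (rcomp (form_fun r F' G' H' J' \<theta>') (mobius a b c e))"
proof -
  define N where "N = mobius a b c e"
  have M: "transcendental (mobius \<alpha> \<beta> \<gamma> \<delta>)" and N: "transcendental N"
    using transcendental_mobius[OF alg_closed] det by (auto simp: N_def)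
  have "rcomp f (rcomp (mobius \<alpha> \<beta> \<gamma> \<delta>) N) = rcomp (rcomp f (mobius \<alpha> \<beta> \<gamma> \<delta>)) N"
    by (rule rcomp_rcomp[OF M N, symmetric])
  also have "\<dots> = rconst lam * rcomp (form_fun r F' G' H' J' \<theta>') N + (rcomp h N ^ p - rcomp h N)"
    by (simp add: eq rcomp_add[OF N] rcomp_diff[OF N] rcomp_mult[OF N] rcomp_power[OF N]
        rcomp_rconst[OF N])
  finally have "rcomp f (rcomp (mobius \<alpha> \<beta> \<gamma> \<delta>) N)
      = rconst lam * rcomp (form_fun r F' G' H' J' \<theta>') N + (rcomp h N ^ p - rcomp h N)" .
  moreover have "coprime_pole_order p (rcomp (form_fun r F' G' H' J' \<theta>') N)"
    unfolding coprime_pole_order_def N_def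
    using form_pullback_coprime_pole[OF form' alg_closed det(2)] by blast
  ultimately show ?thesis
    unfolding N_def using has_fdeg_mod_artin_schreier \<open>lam \<noteq> 0\<close> \<open>p > 1\<close> pole by blast
qed

lemma good_form_pole_orders:
  assumes "good_form p r d F G H J \<theta>" and "i \<in> {1, 2, 3}"
  shows "d i > 0" and "\<not> p dvd d i"
proof -
  have "good_poly p (d i) (if i = 1 then F else if i = 2 then G else H)"
    using assms by (auto simp: good_form_def)
  then show "d i > 0" "\<not> p dvd d i" using good_polyD(2,3) by blast+
qed

lemma pole_orders_distinct:
  fixes d :: "nat \<Rightarrow> nat"
  assumes "d 1 > d 2" "d 2 > d 3" "{d 1, d 2, d 3} \<inter> d ` {4..r+1} = {}"
    and i: "i \<in> {2, 3} \<union> {4..r+1}"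
  shows "d i \<noteq> d 1" and "d i = d 2 \<Longrightarrow> i = 2" and "d i = d 3 \<Longrightarrow> i = 3"
proof -
  have "d j \<notin> {d 1, d 2, d 3}" if "j \<in> {4..r+1}" for j using assms(3) that by blast
  then show "d i \<noteq> d 1" "d i = d 2 \<Longrightarrow> i = 2" "d i = d 3 \<Longrightarrow> i = 3"
    using i assms(1,2) by auto
qed

text \<open>If M(N(\<infinity>)) is the pole \<infinity>, 0 or 1 of the first form, then N(\<infinity>) is a pole of the same
  order of the second one.\<close>

lemma transforms_pullback_pole:
  fixes \<alpha> \<beta> \<gamma> \<delta> a b c e :: "'a::field_gcd"
  assumes alg_closed: "\<forall>q::'a poly. degree q > 0 \<longrightarrow> (\<exists>x. poly q x = 0)"
    and form: "good_form p r d F G H J \<theta>" and form': "good_form p r d F' G' H' J' \<theta>'"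
    and "p > 1" "lam \<noteq> 0" and det: "\<alpha> * \<delta> - \<beta> * \<gamma> \<noteq> 0" "a * e - b * c \<noteq> 0"
    and eq: "rcomp (form_fun r F G H J \<theta>) (mobius \<alpha> \<beta> \<gamma> \<delta>)
      = rconst lam * form_fun r F' G' H' J' \<theta>' + h ^ p - h"
    and i: "i \<in> {1, 2, 3}"
    and pole: "has_fdeg (d i) (rcomp (form_fun r F G H J \<theta>) (rcomp (mobius \<alpha> \<beta> \<gamma> \<delta>) (mobius a b c e)))"
  shows "(c = 0 \<and> d i = d 1) \<or>
    (c \<noteq> 0 \<and> (\<exists>j\<in>{2, 3} \<union> {4..r+1}. a = (\<theta>'(2 := 0, 3 := 1)) j * c \<and> d i = d j))"
proof -
  have "int (d i) > 0" "\<not> int p dvd int (d i)"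
    using good_form_pole_orders[OF form i] by (simp_all add: int_dvd_int_iff)
  then have "has_fdeg (d i) (rcomp (form_fun r F' G' H' J' \<theta>') (mobius a b c e))"
    using transforms_pole_transfer[OF alg_closed form' \<open>p > 1\<close> \<open>lam \<noteq> 0\<close> det eq pole] by blast
  then show ?thesis
    using form_pullback_pole_cases[OF form' alg_closed det(2) _ \<open>int (d i) > 0\<close>] by auto
qed

text \<open>M fixes \<infinity>, 0 and 1: take N with M(N(x)) equal to x, 1 / x and 1 + 1 / x in turn.\<close>

lemma transforms_form_fun_mobius_eq_rX:
  fixes \<alpha> \<beta> \<gamma> \<delta> lam :: "'a::field_gcd"
  assumes alg_closed: "\<forall>q::'a poly. degree q > 0 \<longrightarrow> (\<exists>x. poly q x = 0)"
    and form: "good_form p r d F G H J \<theta>" and form': "good_form p r d F' G' H' J' \<theta>'"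
    and d: "d 1 > d 2" "d 2 > d 3" "{d 1, d 2, d 3} \<inter> d ` {4..r+1} = {}"
    and "p > 1" "lam \<noteq> 0" and det: "\<alpha> * \<delta> - \<beta> * \<gamma> \<noteq> 0"
    and eq: "rcomp (form_fun r F G H J \<theta>) (mobius \<alpha> \<beta> \<gamma> \<delta>)
      = rconst lam * form_fun r F' G' H' J' \<theta>' + h ^ p - h"
  shows "mobius \<alpha> \<beta> \<gamma> \<delta> = rX"
proof -
  note moves = transforms_pullback_pole[OF alg_closed form form' \<open>p > 1\<close> \<open>lam \<noteq> 0\<close> det _ eq]
  note pole = form_pullback_pole[OF form alg_closed]
  note distinct = pole_orders_distinct[OF d]
  have comp: "rcomp (mobius \<alpha> \<beta> \<gamma> \<delta>) (mobius a b c e)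
      = mobius (\<alpha> * a + \<beta> * c) (\<alpha> * b + \<beta> * e) (\<gamma> * a + \<delta> * c) (\<gamma> * b + \<delta> * e)"
    if "a * e - b * c \<noteq> 0" for a b c e
    using rcomp_mobius[OF transcendental_mobius[OF alg_closed that] that] .
  have "\<gamma> = 0"
  proof -
    have N: "\<delta> * \<alpha> - - \<beta> * - \<gamma> \<noteq> 0" using det by (simp add: algebra_simps)
    have "rcomp (mobius \<alpha> \<beta> \<gamma> \<delta>) (mobius \<delta> (- \<beta>) (- \<gamma>) \<alpha>) = mobius 1 0 0 1"
      using comp[OF N] mobius_scale[OF det, of 1 0 0 1] by (simp add: algebra_simps)
    moreover have "has_fdeg (d 1) (rcomp (form_fun r F G H J \<theta>) (mobius 1 0 0 1))"
      by (rule pole(1)) simp_all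
    ultimately show ?thesis using moves[OF N, of 1] distinct(1) by force
  qed
  then have "\<alpha> \<noteq> 0" "\<delta> \<noteq> 0" using det by auto
  have "\<beta> = 0"
  proof -
    have N: "- \<beta> * 0 - \<delta> * \<alpha> \<noteq> 0" using \<open>\<alpha> \<noteq> 0\<close> \<open>\<delta> \<noteq> 0\<close> by simp
    have "rcomp (mobius \<alpha> \<beta> \<gamma> \<delta>) (mobius (- \<beta>) \<delta> \<alpha> 0) = mobius 0 1 1 0"
      using comp[OF N] mobius_scale[of "\<alpha> * \<delta>" 0 1 1 0] \<open>\<gamma> = 0\<close> \<open>\<alpha> \<noteq> 0\<close> \<open>\<delta> \<noteq> 0\<close>
      by (simp add: algebra_simps)
    moreover have "has_fdeg (d 2) (rcomp (form_fun r F G H J \<theta>) (mobius 0 1 1 0))"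
      by (rule pole(2)) simp_all
    ultimately show ?thesis using moves[OF N, of 2] d(1) distinct(2) by force
  qed
  have "\<delta> = \<alpha>"
  proof -
    have N: "\<delta> * 0 - \<delta> * \<alpha> \<noteq> 0" using \<open>\<alpha> \<noteq> 0\<close> \<open>\<delta> \<noteq> 0\<close> by simp
    have "rcomp (mobius \<alpha> \<beta> \<gamma> \<delta>) (mobius \<delta> \<delta> \<alpha> 0) = mobius 1 1 1 0"
      using comp[OF N] mobius_scale[of "\<alpha> * \<delta>" 1 1 1 0] \<open>\<beta> = 0\<close> \<open>\<gamma> = 0\<close> \<open>\<alpha> \<noteq> 0\<close> \<open>\<delta> \<noteq> 0\<close>
      by (simp add: algebra_simps)
    moreover have "has_fdeg (d 3) (rcomp (form_fun r F G H J \<theta>) (mobius 1 1 1 0))"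
      by (rule pole(2)) simp_all
    ultimately show ?thesis using moves[OF N, of 3] d(1,2) distinct(3) by force
  qed
  show ?thesis
    using \<open>\<gamma> = 0\<close> \<open>\<beta> = 0\<close> \<open>\<delta> = \<alpha>\<close> \<open>\<alpha> \<noteq> 0\<close> by (simp add: mobius_scalar_eq_rX)
qed

lemma form_fun_artin_schreier_constant:
  fixes F G H :: "'a::field_gcd poly"
  assumes alg_closed: "\<forall>q::'a poly. degree q > 0 \<longrightarrow> (\<exists>x. poly q x = 0)"
    and form: "good_form p r d F G H J \<theta>" and form': "good_form p r d F' G' H' J' \<theta>'"
    and "p > 1" and f: "form_fun r F G H J \<theta> - rconst lam * form_fun r F' G' H' J' \<theta>' = h ^ p - h"
  shows "\<exists>c. c ^ p = c \<and> h = rconst c"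
proof -
  define f where "f = form_fun r F G H J \<theta> - rconst lam * form_fun r F' G' H' J' \<theta>'"
  have "as_reduced p f"
    unfolding f_def using form form' by (intro as_reduced_diff as_reduced_form_fun)
  moreover have "as_reduced p (rcomp f (mobius t 1 1 0))" for t
  proof -
    note T = transcendental_mobius_at[OF alg_closed, of t]
    show ?thesis
      unfolding f_def rcomp_diff[OF T] rcomp_mult[OF T] rcomp_rconst[OF T]
      using form form' alg_closed by (intro as_reduced_diff as_reduced_form_fun_pullback)
  qed
  ultimately obtain c where c: "h = rconst c"
    using artin_schreier_constant[OF alg_closed \<open>p > 1\<close> f[folded f_def]] by blast
  then have "f = rconst (c ^ p - c)" using f by (simp add: f_def rconst_diff rconst_power)
  then have "c ^ p - c = 0" unfolding f_def by (rule form_fun_diff_rconst[OF form form'])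
  then show ?thesis using c by auto
qed

theorem theorem6p6:
  fixes p r :: nat and d :: "nat \<Rightarrow> nat"
    and F G H F' G' H' :: "'a::field_gcd poly" and J J' :: "nat \<Rightarrow> 'a poly"
    and \<theta> \<theta>' :: "nat \<Rightarrow> 'a" and \<alpha> \<beta> \<gamma> \<delta> lam :: 'a and h :: "'a poly fract"
  assumes "prime p" and "odd p"
    and "is_alg_closure_Fp p TYPE('a)"
    and "good_form p r d F G H J \<theta>"
    and "good_form p r d F' G' H' J' \<theta>'"
    and "d 1 > d 2" and "d 2 > d 3"
    and "{d 1, d 2, d 3} \<inter> d ` {4..r+1} = {}"
    and "transforms p \<alpha> \<beta> \<gamma> \<delta> lam h (form_fun r F G H J \<theta>) (form_fun r F' G' H' J' \<theta>')"
  shows "mobius \<alpha> \<beta> \<gamma> \<delta> = rX \<and> (\<exists>c::'a. c ^ p = c \<and> h = rconst c)"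
proof -
  note form = assms(4) and form' = assms(5)
  have alg_closed: "\<forall>q::'a poly. degree q > 0 \<longrightarrow> (\<exists>x. poly q x = 0)"
    using assms(3) by (simp add: is_alg_closure_Fp_def)
  have "p > 1" using \<open>prime p\<close> prime_gt_1_nat by blast
  have det: "\<alpha> * \<delta> - \<beta> * \<gamma> \<noteq> 0" and "lam \<noteq> 0"
    and eq: "rcomp (form_fun r F G H J \<theta>) (mobius \<alpha> \<beta> \<gamma> \<delta>)
      = rconst lam * form_fun r F' G' H' J' \<theta>' + h ^ p - h"
    using assms(9) by (auto simp: transforms_def)
  have M: "mobius \<alpha> \<beta> \<gamma> \<delta> = rX"
    using transforms_form_fun_mobius_eq_rX[OF alg_closed form form' assms(6-8) \<open>p > 1\<close> \<open>lam \<noteq> 0\<close> det eq] .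
  then have "form_fun r F G H J \<theta> - rconst lam * form_fun r F' G' H' J' \<theta>' = h ^ p - h"
    using eq by (simp add: rcomp_rX_right algebra_simps)
  then show ?thesis
    using M form_fun_artin_schreier_constant[OF alg_closed form form' \<open>p > 1\<close>] by blast
qed

end
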